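(* For every $\delta\in\mathbb R$, $$\lim_{T\to\infty,\,T\in2\mathbb N}(Q_T)^{-1}(e^{-\delta})=(Q_\infty)^{-1}(e^{-\delta}\wedge1).$$
   Context: $(S_n)$ is the simple symmetric random walk on $\mathbb Z$ started at $0$ with law $\mathbf P$. For $T\in2\mathbb N\cup\{\infty\}$, $\tau^T_1:=\inf\{n>0:S_n\in\{-T,0,T\}\}$ (for $T=\infty$ the first return time to $0$) and $Q_T(\lambda):=\mathbf E[e^{-\lambda\tau^T_1}]$. For $T<\infty$, $Q_T$ is finite, analytic, strictly decreasing on $(\lambda_0^T,\infty)$, $\lambda_0^T:=-\frac12\log(1+\tan^2(\pi/T))<0$, with $Q_T(\lambda)\to\infty$ as $\lambda\downarrow\lambda_0^T$ and $\to0$ as $\lambda\to\infty$; $(Q_T)^{-1}:(0,\infty)\to(\lambda^T_0,\infty)$ is its inverse. $Q_\infty(\lambda)=1-\sqrt{1-e^{-2\lambda}}$ for $\lambda\ge0$ (and $+\infty$ for $\lambda<0$), with inverse $(Q_\infty)^{-1}:(0,1]\to[0,\infty)$. *)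

theory Defs
  imports Complex_Main "HOL-Library.Extended_Nonnegative_Real" "HOL-Library.Extended_Nat"
begin

text \<open>Simple symmetric random walk: a path of length n is a list of n steps in {-1,1},
  each having probability 2^(-n).
  T :: enat encodes T in 2N (finite) or T = infinity.\<close>

definition hitset :: "enat \<Rightarrow> int \<Rightarrow> bool" where
  "hitset T x \<longleftrightarrow> x = 0 \<or> enat (nat \<bar>x\<bar>) = T"

definition steps :: "nat \<Rightarrow> int list set" where
  "steps n = {xs. length xs = n \<and> set xs \<subseteq> {-1, 1}}"

definition walk :: "int list \<Rightarrow> nat \<Rightarrow> int" where
  "walk xs k = sum_list (take k xs)"

text \<open>P(tau^T_1 = n), with tau^T_1 = inf{n > 0 : S_n in {-T,0,T}}.\<close>
definition tau_prob :: "enat \<Rightarrow> nat \<Rightarrow> real" where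
  "tau_prob T n = (if n = 0 then 0 else
     real (card {xs \<in> steps n. (\<forall>k. 0 < k \<and> k < n \<longrightarrow> \<not> hitset T (walk xs k))
                             \<and> hitset T (walk xs n)}) / 2 ^ n)"

text \<open>Q_T(lambda) = E[exp(-lambda tau^T_1)], as an extended nonnegative real
  (tau^T_1 is a.s. finite, so the expectation is this series).\<close>
definition Q :: "enat \<Rightarrow> real \<Rightarrow> ennreal" where
  "Q T l = (\<Sum>n. ennreal (exp (- l * real n) * tau_prob T n))"

definition lambda0 :: "nat \<Rightarrow> real" where
  "lambda0 T = - (1/2) * ln (1 + (tan (pi / real T))\<^sup>2)"

definition Qinv_fin :: "nat \<Rightarrow> real \<Rightarrow> real" where
  "Qinv_fin T y = (THE l. lambda0 T < l \<and> Q (enat T) l = ennreal y)"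

definition Qinv_inf :: "real \<Rightarrow> real" where
  "Qinv_inf y = (THE l. 0 \<le> l \<and> Q \<infinity> l = ennreal y)"

end

theory Submission
  imports Defs "HOL-Analysis.Uniform_Limit" "HOL-Real_Asymp.Real_Asymp"
begin

(* 1. Path counting is replaced by a recursion: P(tau^T_1 = n) equals ret_prob (hitset T) n,
      the probability that the walk started at 1 first enters the hitting set at time n-1.
      Its value is expressed through the killed-walk operators hit (mass absorbed at time m)
      and survive (mass still alive at time m), which satisfy a harmonic decomposition.
   2. For T = 2k the sine eigenfunction of the strip gives survival bounds
      s c^m <= P(survive m steps) <= c^m with c = cos(pi/2k) = exp lambda0; hence the
      Laplace transform of the return law is finite on (ln c, inf) and blows up at ln c.
   3. For T = inf, comparing with the strip (gambler's ruin) gives survival -> 0, so the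
      return-time law sums to 1 and laplace(0) = 1.
   4. Generic facts about l |-> laplace p l (summability, continuity, strict decrease,
      existence of roots) characterise Qinv_fin and Qinv_inf as roots of laplace.
   5. The strip and infinite return laws agree before time 2k, so by Tannery's theorem the
      transforms converge on (0, inf); an abstract lemma on roots of converging decreasing
      functions (root_convergence) then yields the theorem in a few lines. *)

section \<open>Paths of the walk and the first-entrance recursion\<close>

text \<open>hit H f m x: expectation of f at the first entrance time into H, restricted to the event
  that this time equals m, for the walk started at x.\<close>
fun hit :: "(int \<Rightarrow> bool) \<Rightarrow> (int \<Rightarrow> real) \<Rightarrow> nat \<Rightarrow> int \<Rightarrow> real" where
  "hit H f 0 x = (if H x then f x else 0)"
| "hit H f (Suc m) x = (if H x then 0 else (hit H f m (x - 1) + hit H f m (x + 1)) / 2)"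

text \<open>survive H f m x: expectation of f at time m on the event that H was not entered up to m.\<close>
fun survive :: "(int \<Rightarrow> bool) \<Rightarrow> (int \<Rightarrow> real) \<Rightarrow> nat \<Rightarrow> int \<Rightarrow> real" where
  "survive H f 0 x = (if H x then 0 else f x)"
| "survive H f (Suc m) x = (if H x then 0 else (survive H f m (x - 1) + survive H f m (x + 1)) / 2)"

abbreviation hit_prob :: "(int \<Rightarrow> bool) \<Rightarrow> nat \<Rightarrow> int \<Rightarrow> real" where
  "hit_prob H \<equiv> hit H (\<lambda>_. 1)"

abbreviation surv_prob :: "(int \<Rightarrow> bool) \<Rightarrow> nat \<Rightarrow> int \<Rightarrow> real" where
  "surv_prob H \<equiv> survive H (\<lambda>_. 1)"

text \<open>Probability that the walk from 0 returns to H for the first time at time n: after the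
  first step (to 1 or, symmetrically, to -1) it must first enter H at time n - 1.\<close>
definition ret_prob :: "(int \<Rightarrow> bool) \<Rightarrow> nat \<Rightarrow> real" where
  "ret_prob H n = (if n = 0 then 0 else hit_prob H (n - 1) 1)"

lemma finite_steps: "finite (steps n)"
proof -
  have "steps n = {xs. set xs \<subseteq> {-1, 1} \<and> length xs = n}" by (auto simp: steps_def)
  then show ?thesis using finite_lists_length_eq[of "{-1, 1::int}" n] by simp
qed

lemma card_steps_Suc:
  "card {xs \<in> steps (Suc n). P xs}
     = card {ys \<in> steps n. P ((-1) # ys)} + card {ys \<in> steps n. P (1 # ys)}"
proof -
  have split: "{xs \<in> steps (Suc n). P xs}
      = Cons (-1) ` {ys \<in> steps n. P ((-1) # ys)} \<union> Cons 1 ` {ys \<in> steps n. P (1 # ys)}"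
  proof (rule set_eqI, rule iffI)
    fix xs assume "xs \<in> {xs \<in> steps (Suc n). P xs}"
    then obtain s ys where "xs = s # ys" "s \<in> {-1, 1}" "ys \<in> steps n" "P xs"
      by (cases xs) (auto simp: steps_def)
    then show "xs \<in> Cons (-1) ` {ys \<in> steps n. P ((-1) # ys)} \<union> Cons 1 ` {ys \<in> steps n. P (1 # ys)}"
      by auto
  qed (auto simp: steps_def)
  show ?thesis
    unfolding split
    by (subst card_Un_disjoint) (auto intro: finite_subset[OF _ finite_steps] simp: card_image)
qed

lemma walk_0 [simp]: "walk xs 0 = 0"
  by (simp add: walk_def)

lemma walk_Cons_Suc [simp]: "walk (s # ys) (Suc k) = s + walk ys k"
  by (simp add: walk_def)

lemma card_first_entrance:
  "real (card {xs \<in> steps m. (\<forall>k<m. \<not> H (x + walk xs k)) \<and> H (x + walk xs m)})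
     = 2 ^ m * hit_prob H m x"
proof (induction m arbitrary: x)
  case 0
  have "steps 0 = {[]}" by (auto simp: steps_def)
  then show ?case by simp
next
  case (Suc m)
  have first_step: "((\<forall>k<Suc m. \<not> H (x + walk (s # ys) k)) \<and> H (x + walk (s # ys) (Suc m)))
      \<longleftrightarrow> \<not> H x \<and> ((\<forall>k<m. \<not> H ((x + s) + walk ys k)) \<and> H ((x + s) + walk ys m))" for s ys
    by (auto simp: less_Suc_eq_0_disj add.assoc)
  show ?case
    unfolding card_steps_Suc first_step
    using Suc.IH[of "x - 1"] Suc.IH[of "x + 1"] by (simp add: algebra_simps)
qed

lemma hit_prob_reflect:
  assumes "\<And>x. H (- x) = H x"
  shows "hit_prob H m (- x) = hit_prob H m x"
proof (induction m arbitrary: x)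
  case 0
  show ?case using assms[of x] by simp
next
  case (Suc m)
  have "- x - 1 = - (x + 1)" "- x + 1 = - (x - 1)" by simp_all
  then have "hit_prob H m (- x - 1) = hit_prob H m (x + 1)"
    and "hit_prob H m (- x + 1) = hit_prob H m (x - 1)"
    using Suc.IH[of "x + 1"] Suc.IH[of "x - 1"] by (simp_all del: hit.simps)
  then show ?case using assms[of x] by simp
qed

lemma tau_prob_eq_ret_prob: "tau_prob T n = ret_prob (hitset T) n"
proof (cases n)
  case 0
  then show ?thesis by (simp add: tau_prob_def ret_prob_def)
next
  case (Suc m)
  let ?H = "hitset T"
  have first_step: "((\<forall>k. 0 < k \<and> k < Suc m \<longrightarrow> \<not> ?H (walk (s # ys) k)) \<and> ?H (walk (s # ys) (Suc m)))
      \<longleftrightarrow> ((\<forall>k<m. \<not> ?H (s + walk ys k)) \<and> ?H (s + walk ys m))" for s ys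
    by (auto simp: gr0_conv_Suc)
  have sym: "hit_prob ?H m (- 1) = hit_prob ?H m 1"
    using hit_prob_reflect[of ?H m 1] by (simp add: hitset_def)
  have "real (card {xs \<in> steps (Suc m). (\<forall>k. 0 < k \<and> k < Suc m \<longrightarrow> \<not> ?H (walk xs k))
                                      \<and> ?H (walk xs (Suc m))})
     = 2 ^ Suc m * hit_prob ?H m 1"
    unfolding card_steps_Suc first_step
    using card_first_entrance[of m ?H "-1"] card_first_entrance[of m ?H 1] sym by simp
  then show ?thesis using Suc by (simp add: tau_prob_def ret_prob_def)
qed

section \<open>Calculus of the killed walk\<close>

lemma hit_nonneg: "(\<And>x. 0 \<le> f x) \<Longrightarrow> 0 \<le> hit H f m x"
  by (induction m arbitrary: x) auto

lemma survive_nonneg: "(\<And>x. 0 \<le> f x) \<Longrightarrow> 0 \<le> survive H f m x"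
  by (induction m arbitrary: x) auto

lemma hit_add: "hit H (\<lambda>x. f x + g x) m x = hit H f m x + hit H g m x"
  by (induction m arbitrary: x) (auto simp: field_simps)

lemma hit_scale: "hit H (\<lambda>x. a * f x) m x = a * hit H f m x"
  by (induction m arbitrary: x) (auto simp: field_simps)

lemma survive_scale: "survive H (\<lambda>x. a * f x) m x = a * survive H f m x"
  by (induction m arbitrary: x) (auto simp: field_simps)

lemma hit_cong: "(\<And>x. H x \<Longrightarrow> f x = g x) \<Longrightarrow> hit H f m x = hit H g m x"
  by (induction m arbitrary: x) auto

lemma survive_mono_on:
  assumes closed: "\<And>x. x \<in> S \<Longrightarrow> \<not> H x \<Longrightarrow> x - 1 \<in> S \<and> x + 1 \<in> S"
    and le: "\<And>x. x \<in> S \<Longrightarrow> \<not> H x \<Longrightarrow> f x \<le> g x"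
    and "x \<in> S"
  shows "survive H f m x \<le> survive H g m x"
  using \<open>x \<in> S\<close>
proof (induction m arbitrary: x)
  case 0
  then show ?case using le by simp
next
  case (Suc m)
  show ?case
  proof (cases "H x")
    case False
    then have "x - 1 \<in> S" "x + 1 \<in> S" using closed Suc.prems by auto
    then show ?thesis using Suc.IH False by (simp add: add_mono divide_right_mono)
  qed simp
qed

lemma survive_eigen:
  assumes "\<And>x. h (x - 1) + h (x + 1) = 2 * c * h x" and "\<And>x. H x \<Longrightarrow> h x = 0"
  shows "survive H h m x = c ^ m * h x"
proof (induction m arbitrary: x)
  case (Suc m)
  have "c ^ m * h (x - 1) + c ^ m * h (x + 1) = c ^ m * (2 * c * h x)"
    using assms(1)[of x] by (simp add: distrib_left[symmetric])
  then show ?case using Suc assms(2)[of x] by (simp add: field_simps)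
qed (use assms(2) in simp)

text \<open>Optional stopping in finite time: for h harmonic off H, the value h x splits into the
  mass absorbed up to time m and the mass still alive at time m.\<close>
lemma hit_survive_harmonic:
  assumes harm: "\<And>x. \<not> H x \<Longrightarrow> h (x - 1) + h (x + 1) = 2 * h x"
  shows "(\<Sum>j\<le>m. hit H h j x) + survive H h m x = h x"
proof (induction m arbitrary: x)
  case 0
  then show ?case by simp
next
  case (Suc m)
  have shift: "(\<Sum>j\<le>Suc m. hit H h j x) = hit H h 0 x + (\<Sum>j\<le>m. hit H h (Suc j) x)"
    by (rule sum.atMost_Suc_shift)
  show ?case
  proof (cases "H x")
    case False
    have "(\<Sum>j\<le>m. hit H h (Suc j) x) = ((\<Sum>j\<le>m. hit H h j (x - 1)) + (\<Sum>j\<le>m. hit H h j (x + 1))) / 2"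
      using False by (simp add: sum.distrib sum_divide_distrib[symmetric])
    then have "(\<Sum>j\<le>Suc m. hit H h j x) + survive H h (Suc m) x
        = ((\<Sum>j\<le>m. hit H h j (x - 1)) + survive H h m (x - 1)
           + ((\<Sum>j\<le>m. hit H h j (x + 1)) + survive H h m (x + 1))) / 2"
      using False shift by (simp add: field_simps)
    then show ?thesis using Suc.IH[of "x - 1"] Suc.IH[of "x + 1"] harm[OF False] by simp
  qed (use shift in simp)
qed

lemma hit_surv_prob: "(\<Sum>j\<le>m. hit_prob H j x) + surv_prob H m x = 1"
  using hit_survive_harmonic[where h = "\<lambda>_. 1"] by simp

lemma hit_prob_le_1: "hit_prob H m x \<le> 1"
proof -
  have "hit_prob H m x \<le> (\<Sum>j\<le>m. hit_prob H j x)"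
    by (rule member_le_sum) (auto intro: hit_nonneg)
  then show ?thesis
    using hit_surv_prob[where H = H and m = m and x = x] survive_nonneg[where f = "\<lambda>_. 1" and H = H and m = m and x = x]
    by simp
qed

lemma hit_prob_Suc: "hit_prob H (Suc m) x = surv_prob H m x - surv_prob H (Suc m) x"
  using hit_surv_prob[where H = H and m = m and x = x] hit_surv_prob[where H = H and m = "Suc m" and x = x] by simp

lemma hit_prob_block:
  "m \<le> M \<Longrightarrow> (\<Sum>j\<in>{m..<M}. hit_prob H (Suc j) x) = surv_prob H m x - surv_prob H M x"
  by (induction M rule: dec_induct) (simp_all del: hit.simps survive.simps add: hit_prob_Suc)

lemma hit_antimono_set:
  assumes sub: "\<And>x. H x \<Longrightarrow> H' x" and nn: "\<And>x. 0 \<le> f x"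
    and vanish: "\<And>x. H' x \<Longrightarrow> \<not> H x \<Longrightarrow> f x = 0"
  shows "hit H' f m x \<le> hit H f m x"
proof (induction m arbitrary: x)
  case 0
  then show ?case using sub vanish by auto
next
  case (Suc m)
  show ?case
  proof (cases "H' x")
    case True
    then show ?thesis using hit_nonneg[OF nn] by simp
  next
    case False
    then show ?thesis using sub Suc.IH[of "x - 1"] Suc.IH[of "x + 1"] by auto
  qed
qed

lemma hit_local:
  "(\<And>y. \<bar>y - x\<bar> \<le> int m \<Longrightarrow> H1 y = H2 y) \<Longrightarrow> hit H1 f m x = hit H2 f m x"
proof (induction m arbitrary: x)
  case (Suc m)
  have "hit H1 f m (x - 1) = hit H2 f m (x - 1)" "hit H1 f m (x + 1) = hit H2 f m (x + 1)"
    by (rule Suc.IH; use Suc.prems in auto)+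
  moreover have "H1 x = H2 x" using Suc.prems[of x] by simp
  ultimately show ?case by simp
qed simp

lemma ret_prob_nonneg: "0 \<le> ret_prob H n"
  by (simp add: ret_prob_def hit_nonneg)

lemma ret_prob_le_1: "ret_prob H n \<le> 1"
  by (simp add: ret_prob_def hit_prob_le_1)

lemma ret_prob_0 [simp]: "ret_prob H 0 = 0"
  by (simp add: ret_prob_def)

lemma ret_prob_2: "H 0 \<Longrightarrow> \<not> H 1 \<Longrightarrow> 1/2 \<le> ret_prob H 2"
  by (simp add: ret_prob_def numeral_2_eq_2)

lemma ret_prob_partial_sum: "(\<Sum>n<m + 2. ret_prob H n) = 1 - surv_prob H m 1"
proof -
  have "(\<Sum>n<Suc (Suc m). ret_prob H n) = ret_prob H 0 + (\<Sum>n<Suc m. ret_prob H (Suc n))"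
    by (rule sum.lessThan_Suc_shift)
  also have "\<dots> = (\<Sum>j\<le>m. hit_prob H j 1)"
    by (simp del: hit.simps add: ret_prob_def lessThan_Suc_atMost)
  finally show ?thesis using hit_surv_prob[where H = H and m = m and x = 1] by simp
qed

lemma hitset_strip_iff: "hitset (enat (2 * k)) x \<longleftrightarrow> x = 0 \<or> \<bar>x\<bar> = 2 * int k"
  by (auto simp: hitset_def)

lemma hitset_inf_iff: "hitset \<infinity> x \<longleftrightarrow> x = 0"
  by (auto simp: hitset_def)

abbreviation ret_inf :: "nat \<Rightarrow> real" where
  "ret_inf \<equiv> ret_prob (hitset \<infinity>)"

text \<open>Before time 2k the walk cannot feel the walls at -2k and 2k.\<close>
lemma ret_prob_strip_eq_inf: "n < 2 * k \<Longrightarrow> ret_prob (hitset (enat (2 * k))) n = ret_inf n"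
proof (cases n)
  case (Suc j)
  assume n: "n < 2 * k"
  have "hit_prob (hitset (enat (2 * k))) j 1 = hit_prob (hitset \<infinity>) j 1"
  proof (rule hit_local)
    fix y :: int assume "\<bar>y - 1\<bar> \<le> int j"
    then have "\<bar>y\<bar> < 2 * int k" using n Suc by linarith
    then show "hitset (enat (2 * k)) y = hitset \<infinity> y"
      unfolding hitset_strip_iff hitset_inf_iff by auto
  qed
  then show ?thesis using Suc by (simp add: ret_prob_def del: hit.simps)
qed simp

section \<open>Laplace transforms of laws on the naturals\<close>

definition laplace :: "(nat \<Rightarrow> real) \<Rightarrow> real \<Rightarrow> real" where
  "laplace p l = (\<Sum>n. exp (- l * real n) * p n)"

lemma exp_mult_nat: "exp (- (l * real n)) = exp (- l) ^ n"
  by (simp add: exp_of_nat_mult[symmetric] mult.commute)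

lemma exp_neg_mult_lt_1:
  fixes r l :: real
  assumes "0 < r" and "ln r < l"
  shows "exp (- l) * r < 1"
proof -
  have "exp (- l) * r = exp (ln r - l)" using assms(1) by (simp add: exp_diff exp_minus field_simps)
  also have "\<dots> < 1" using assms(2) by simp
  finally show ?thesis .
qed

lemma geometric_weight_summable:
  fixes p :: "nat \<Rightarrow> real" and B r K :: real
  assumes nn: "\<And>n. 0 \<le> p n" and bd: "\<And>n. p n \<le> B * r ^ n" and r: "0 < r"
    and K: "0 \<le> K" "K * r < 1"
  shows "summable (\<lambda>n. p n * K ^ n)"
proof (rule summable_comparison_test'[where g = "\<lambda>n. B * (K * r) ^ n"])
  show "summable (\<lambda>n. B * (K * r) ^ n)"
    using K r by (intro summable_mult summable_geometric) simp
  fix n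
  have "p n * K ^ n \<le> B * r ^ n * K ^ n" using bd K by (intro mult_right_mono) auto
  then show "norm (p n * K ^ n) \<le> B * (K * r) ^ n"
    using nn K by (simp add: power_mult_distrib algebra_simps)
qed

text \<open>Under a bound p n \<le> B r^n the transform is a power series in exp(-l) with radius at
  least 1/r, hence finite and continuous for l > ln r.\<close>
lemma laplace_summable:
  assumes nn: "\<And>n. 0 \<le> p n" and bd: "\<And>n. p n \<le> B * r ^ n" and r: "0 < r" and l: "ln r < l"
  shows "summable (\<lambda>n. exp (- l * real n) * p n)"
  using geometric_weight_summable[OF nn bd r _ exp_neg_mult_lt_1[OF r l]]
  by (simp add: exp_mult_nat mult.commute)

lemma laplace_isCont:
  assumes nn: "\<And>n. 0 \<le> p n" and bd: "\<And>n. p n \<le> B * r ^ n" and r: "0 < r" and l: "ln r < l"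
  shows "isCont (laplace p) l"
proof -
  have el: "exp (- l) * r < 1" by (rule exp_neg_mult_lt_1[OF r l])
  define K where "K = (exp (- l) + 1 / r) / 2"
  have K: "exp (- l) < K" "K * r < 1" using el r by (simp_all add: K_def field_simps)
  have "summable (\<lambda>n. p n * K ^ n)"
    using K by (intro geometric_weight_summable[OF nn bd r]) (auto intro: order.trans[of 0 "exp (- l)"])
  then have "isCont (\<lambda>x. \<Sum>n. p n * exp (- x) ^ n) l"
    using K by (intro isCont_powser'[where K = K]) (auto intro!: continuous_intros)
  then show ?thesis
    by (simp add: laplace_def[abs_def] exp_mult_nat mult.commute)
qed

lemma laplace_nonneg:
  assumes "\<And>n. 0 \<le> p n" and "summable (\<lambda>n. exp (- l * real n) * p n)"
  shows "0 \<le> laplace p l"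
  unfolding laplace_def by (rule suminf_nonneg[OF assms(2)]) (simp add: assms(1))

lemma laplace_ennreal:
  assumes "\<And>n. 0 \<le> p n" and "summable (\<lambda>n. exp (- l * real n) * p n)"
  shows "(\<Sum>n. ennreal (exp (- l * real n) * p n)) = ennreal (laplace p l)"
  unfolding laplace_def by (rule suminf_ennreal2) (use assms in auto)

lemma laplace_partial_le:
  assumes "\<And>n. 0 \<le> p n" and "summable (\<lambda>n. exp (- l * real n) * p n)"
  shows "(\<Sum>n<N. exp (- l * real n) * p n) \<le> laplace p l"
  unfolding laplace_def by (rule sum_le_suminf[OF assms(2)]) (auto intro!: mult_nonneg_nonneg assms(1))

lemma laplace_antimono:
  assumes nn: "\<And>n. 0 \<le> p n" and l: "l1 \<le> l2"
    and s1: "summable (\<lambda>n. exp (- l1 * real n) * p n)"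
    and s2: "summable (\<lambda>n. exp (- l2 * real n) * p n)"
  shows "laplace p l2 \<le> laplace p l1"
  unfolding laplace_def
proof (rule suminf_le[OF _ s2 s1])
  fix n
  have "exp (- l2 * real n) \<le> exp (- l1 * real n)" using l by (simp add: mult_right_mono)
  then show "exp (- l2 * real n) * p n \<le> exp (- l1 * real n) * p n"
    using nn by (intro mult_right_mono) auto
qed

lemma laplace_strict_antimono:
  assumes nn: "\<And>n. 0 \<le> p n" and p2: "0 < p 2" and l: "l1 < l2"
    and s1: "summable (\<lambda>n. exp (- l1 * real n) * p n)"
    and s2: "summable (\<lambda>n. exp (- l2 * real n) * p n)"
  shows "laplace p l2 < laplace p l1"
proof -
  have "0 < (\<Sum>n. exp (- l1 * real n) * p n - exp (- l2 * real n) * p n)"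
  proof (rule suminf_pos2[where i = 2])
    show "summable (\<lambda>n. exp (- l1 * real n) * p n - exp (- l2 * real n) * p n)"
      using s1 s2 by (rule summable_diff)
    fix n
    have "exp (- l2 * real n) \<le> exp (- l1 * real n)" using l by (simp add: mult_right_mono)
    then show "0 \<le> exp (- l1 * real n) * p n - exp (- l2 * real n) * p n"
      using nn[of n] by (simp add: mult_right_mono)
  qed (use p2 l in simp)
  also have "\<dots> = laplace p l1 - laplace p l2"
    unfolding laplace_def using s1 s2 by (rule suminf_diff[symmetric])
  finally show ?thesis by simp
qed

lemma laplace_tail_bound:
  assumes nn: "\<And>n. 0 \<le> p n" and le1: "\<And>n. p n \<le> 1" and p0: "p 0 = 0" and l: "0 < l"
  shows "laplace p l \<le> exp (- l / 2) / (1 - exp (- l / 2))"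
proof -
  define v where "v = exp (- l / 2)"
  have v: "0 < v" "v < 1" using l by (auto simp: v_def)
  have bound: "exp (- l * real n) * p n \<le> v * v ^ n" for n
  proof (cases n)
    case (Suc m)
    have "exp (- l * real n) = v ^ n * v ^ n"
      by (simp add: v_def exp_of_nat_mult[symmetric] exp_add[symmetric] mult.commute)
    also have "\<dots> \<le> v * v ^ n"
      using Suc v by (intro mult_right_mono) (auto intro: power_le_one
          power_decreasing[of 1 n v, simplified])
    finally show ?thesis
      using le1[of n] nn[of n] v by (smt (verit) mult_left_le exp_gt_zero zero_le_power)
  qed (use p0 v in simp)
  have geo: "summable (\<lambda>n. v * v ^ n)" using v by (intro summable_mult summable_geometric) auto
  have "laplace p l \<le> (\<Sum>n. v * v ^ n)"
    unfolding laplace_def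
    by (rule suminf_le[OF bound _ geo], rule summable_comparison_test'[OF geo]) (use nn bound in auto)
  also have "\<dots> = v / (1 - v)" using v by (simp add: suminf_mult suminf_geometric)
  finally show ?thesis by (simp add: v_def)
qed

lemma laplace_eventually_small:
  assumes "\<And>n. 0 \<le> p n" and "\<And>n. p n \<le> 1" and "p 0 = 0" and y: "0 < y"
  shows "\<forall>\<^sub>F l in at_top. laplace p l \<le> y"
proof -
  have "((\<lambda>l::real. exp (- l / 2) / (1 - exp (- l / 2))) \<longlongrightarrow> 0) at_top" by real_asymp
  then have "\<forall>\<^sub>F l in at_top. exp (- l / 2) / (1 - exp (- l / 2)) < y" using y by (rule order_tendstoD)
  with eventually_gt_at_top[of 0] show ?thesis
    by eventually_elim (use laplace_tail_bound[of p, OF assms(1-3)] in force)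
qed

text \<open>Intermediate values: if some partial sum at l0 exceeds y, the transform (which tends to 0
  at infinity) takes the value y somewhere on (l0, inf).\<close>
lemma laplace_root_exists:
  assumes nn: "\<And>n. 0 \<le> p n" and le1: "\<And>n. p n \<le> 1" and p0: "p 0 = 0" and y: "0 < y"
    and summ: "\<And>l. l0 < l \<Longrightarrow> summable (\<lambda>n. exp (- l * real n) * p n)"
    and cont: "\<And>l. l0 < l \<Longrightarrow> isCont (laplace p) l"
    and big: "y < (\<Sum>n<N. exp (- l0 * real n) * p n)"
  shows "\<exists>l>l0. laplace p l = y"
proof -
  have "((\<lambda>l. \<Sum>n<N. exp (- l * real n) * p n) \<longlongrightarrow> (\<Sum>n<N. exp (- l0 * real n) * p n)) (at_right l0)"
    by (intro tendsto_intros)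
  then have "\<forall>\<^sub>F l in at_right l0. y < (\<Sum>n<N. exp (- l * real n) * p n)"
    using big by (rule order_tendstoD)
  moreover have "\<forall>\<^sub>F l in at_right l0. l0 < l" by (simp add: eventually_at_right_less)
  ultimately obtain a where a: "l0 < a" "y < (\<Sum>n<N. exp (- a * real n) * p n)"
    using eventually_happens'[OF trivial_limit_at_right_real] eventually_conj by blast
  have ya: "y \<le> laplace p a" using a laplace_partial_le[OF nn summ[OF a(1)], of N] by linarith
  have "\<exists>b. laplace p b \<le> y \<and> a \<le> b"
    using eventually_conj[OF laplace_eventually_small[of p, OF nn le1 p0 y] eventually_ge_at_top[of a]]
    unfolding eventually_at_top_linorder by (meson order_refl)
  then obtain b where b: "laplace p b \<le> y" "a \<le> b" by blast
  have "continuous_on {a..b} (laplace p)"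
    using a(1) by (intro continuous_at_imp_continuous_on ballI cont) auto
  then obtain l where "a \<le> l" "laplace p l = y" using IVT2'[OF b(1) ya b(2)] by blast
  then show ?thesis using a(1) by (intro exI[of _ l]) auto
qed

lemma laplace_tendsto:
  assumes l: "0 < l" and bound: "\<And>k n. \<bar>q k n\<bar> \<le> 1" and lim: "\<And>n. (\<lambda>k. q k n) \<longlonglongrightarrow> p n"
  shows "(\<lambda>k. laplace (q k) l) \<longlonglongrightarrow> laplace p l"
proof -
  have summ: "summable (\<lambda>n. exp (- l * real n))"
    using l by (simp add: exp_mult_nat)
  have bounded: "\<forall>\<^sub>F (n, k) in at_top \<times>\<^sub>F sequentially.
      norm (exp (- l * real n) * q k n) \<le> exp (- l * real n)"
  proof (intro always_eventually allI)
    fix nk :: "nat \<times> nat"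
    show "case nk of (n, k) \<Rightarrow> norm (exp (- l * real n) * q k n) \<le> exp (- l * real n)"
      using bound by (cases nk) (simp add: abs_mult mult_left_le)
  qed
  have "\<And>n. (\<lambda>k. exp (- l * real n) * q k n) \<longlonglongrightarrow> exp (- l * real n) * p n"
    by (intro tendsto_mult_left lim)
  from tannerys_theorem[OF this bounded summ trivial_limit_sequentially]
  show ?thesis unfolding laplace_def by blast
qed

lemma Q_eq_laplace:
  assumes "summable (\<lambda>n. exp (- l * real n) * ret_prob (hitset T) n)"
  shows "Q T l = ennreal (laplace (ret_prob (hitset T)) l)"
  unfolding Q_def tau_prob_eq_ret_prob by (rule laplace_ennreal[OF ret_prob_nonneg assms])

section \<open>The strip of half-width 2k\<close>

text \<open>For T = 2k the killed walk on {1, ..., 2k-1} has the principal Dirichlet eigenfunction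
  phi x = sin (a x), a = pi/(2k), with eigenvalue c = cos a.\<close>
locale strip =
  fixes k :: nat
  assumes k2: "2 \<le> k"
begin

definition "a = pi / (2 * real k)"
definition "c = cos a"
definition "s = sin a"
definition "phi x = sin (a * real_of_int x)"

abbreviation "H \<equiv> hitset (enat (2 * k))"

lemma a_pos: "0 < a" and a_le: "a \<le> pi / 4"
proof -
  show "0 < a" using k2 by (simp add: a_def)
  have "4 \<le> 2 * real k" using k2 by simp
  then show "a \<le> pi / 4" unfolding a_def using pi_gt_zero by (intro divide_left_mono) auto
qed

lemma a_mult_2k: "a * (2 * real k) = pi"
  using k2 by (simp add: a_def)

lemma c_pos: "0 < c" and c_lt_1: "c < 1" and s_pos: "0 < s"
proof -
  show "0 < c" unfolding c_def using a_pos a_le by (intro cos_gt_zero_pi) auto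
  show "c < 1" unfolding c_def using a_pos a_le cos_monotone_0_pi[of 0 a] pi_gt_zero by simp
  show "0 < s" unfolding s_def using a_pos a_le by (intro sin_gt_zero) auto
qed

lemma phi_eigen: "phi (x - 1) + phi (x + 1) = 2 * c * phi x"
proof -
  have "phi (x - 1) + phi (x + 1) = sin (a * x - a) + sin (a * x + a)"
    by (simp add: phi_def algebra_simps)
  also have "\<dots> = 2 * c * phi x"
    by (simp add: sin_add sin_diff c_def phi_def)
  finally show ?thesis .
qed

lemma phi_vanish: "H x \<Longrightarrow> phi x = 0"
proof -
  assume "H x"
  then have "x = 0 \<or> x = 2 * int k \<or> x = - (2 * int k)" unfolding hitset_strip_iff by auto
  then show "phi x = 0" using a_mult_2k by (auto simp: phi_def)
qed

lemma phi_ge_s: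
  assumes "1 \<le> x" and "x \<le> 2 * int k - 1"
  shows "s \<le> phi x"
proof -
  have mono: "s \<le> phi z" if "1 \<le> z" "z \<le> int k" for z :: int
  proof -
    have "a * real_of_int z \<le> a * real k" using a_pos that by (simp add: mult_left_mono)
    also have "\<dots> = pi / 2" using a_mult_2k by (simp add: algebra_simps)
    finally have "a * real_of_int z \<le> pi / 2" .
    moreover have "a \<le> a * real_of_int z" using a_pos that by simp
    ultimately show ?thesis
      using a_pos pi_gt_zero unfolding s_def phi_def by (intro sin_monotone_2pi_le) linarith+
  qed
  show ?thesis
  proof (cases "x \<le> int k")
    case False
    have "phi x = sin (pi - a * real_of_int x)" by (simp add: phi_def)
    also have "pi - a * real_of_int x = a * real_of_int (2 * int k - x)"
      using a_mult_2k by (simp add: algebra_simps)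
    finally show ?thesis using mono[of "2 * int k - x"] assms False by (simp add: phi_def)
  qed (use mono assms in simp)
qed

lemma surv_upper: "surv_prob H m 1 \<le> c ^ m"
proof -
  let ?S = "{0..2 * int k}"
  have "surv_prob H m 1 \<le> survive H (\<lambda>x. (1 / s) * phi x) m 1"
  proof (rule survive_mono_on[where S = ?S])
    fix x assume "x \<in> ?S" "\<not> H x"
    then have "1 \<le> x" "x \<le> 2 * int k - 1" "x - 1 \<in> ?S \<and> x + 1 \<in> ?S"
      unfolding hitset_strip_iff by auto
    then show "x - 1 \<in> ?S \<and> x + 1 \<in> ?S" and "1 \<le> (1 / s) * phi x"
      using phi_ge_s s_pos by (auto simp: field_simps)
  qed (use k2 in auto)
  also have "\<dots> = (1 / s) * (c ^ m * phi 1)"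
    by (simp only: survive_scale survive_eigen[OF phi_eigen phi_vanish])
  also have "phi 1 = s" by (simp add: phi_def s_def)
  finally show ?thesis using s_pos by simp
qed

lemma surv_lower: "c ^ m * s \<le> surv_prob H m 1"
proof -
  have "survive H phi m 1 \<le> surv_prob H m 1"
    by (rule survive_mono_on[where S = UNIV]) (auto simp: phi_def)
  moreover have "survive H phi m 1 = c ^ m * phi 1" by (rule survive_eigen[OF phi_eigen phi_vanish])
  ultimately show ?thesis by (simp add: phi_def s_def)
qed

lemma ret_prob_geometric: "ret_prob H n \<le> (1 / c\<^sup>2) * c ^ n"
proof -
  consider "n = 0" | "n = 1" | j where "n = Suc (Suc j)"
    by (metis One_nat_def not0_implies_Suc)
  then show ?thesis
  proof cases
    case 3
    have "ret_prob H n = hit_prob H (Suc j) 1"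
      using 3 by (simp add: ret_prob_def del: hit.simps)
    also have "\<dots> = surv_prob H j 1 - surv_prob H (Suc j) 1" by (rule hit_prob_Suc)
    also have "\<dots> \<le> c ^ j"
    proof -
      have "0 \<le> surv_prob H (Suc j) 1" by (rule survive_nonneg) simp
      then show ?thesis using surv_upper[of j] by linarith
    qed
    also have "c ^ j = (1 / c\<^sup>2) * c ^ n" using 3 c_pos by (simp add: power2_eq_square)
    finally show ?thesis .
  qed (use k2 c_pos in \<open>auto simp: ret_prob_def hitset_strip_iff\<close>)
qed

lemma ret_prob_summable: "ln c < l \<Longrightarrow> summable (\<lambda>n. exp (- l * real n) * ret_prob H n)"
  by (rule laplace_summable[OF ret_prob_nonneg ret_prob_geometric c_pos])

lemma ret_prob_isCont: "ln c < l \<Longrightarrow> isCont (laplace (ret_prob H)) l"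
  by (rule laplace_isCont[OF ret_prob_nonneg ret_prob_geometric c_pos])

lemma laplace_strip_antimono:
  "ln c < u \<Longrightarrow> u \<le> v \<Longrightarrow> laplace (ret_prob H) v \<le> laplace (ret_prob H) u"
  using laplace_antimono[of "ret_prob H", OF ret_prob_nonneg _ ret_prob_summable ret_prob_summable]
  by simp

text \<open>Any window of K+2 return times starting after time m+1 carries weighted mass at least s/2
  for the weights c^{-n}, provided c^K \<le> s/2: the survival probability drops from about c^m
  to at most c^m s/2 over the window.\<close>
lemma window_mass:
  assumes K: "c ^ K \<le> s / 2"
  shows "s / 2 \<le> (\<Sum>n\<in>{m+2..<m+K+4}. (1 / c) ^ n * ret_prob H n)"
proof -
  let ?M = "m + K + 2"
  have survival_drop: "c ^ m * s / 2 \<le> surv_prob H m 1 - surv_prob H ?M 1"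
  proof -
    have "c ^ ?M \<le> c ^ (m + K)" using c_pos c_lt_1 by (intro power_decreasing) auto
    then have "surv_prob H ?M 1 \<le> c ^ m * c ^ K" using surv_upper[of ?M] by (simp add: power_add)
    also have "\<dots> \<le> c ^ m * (s / 2)" using K c_pos by (intro mult_left_mono) auto
    finally show ?thesis using surv_lower[of m] by simp
  qed
  have "s / 2 \<le> (s / 2) / c\<^sup>2"
    using s_pos c_pos c_lt_1 power_le_one[of c 2] by (simp add: le_divide_eq)
  also have "\<dots> = (1 / c) ^ (m + 2) * (c ^ m * s / 2)"
    using c_pos by (simp add: power_add field_simps power2_eq_square)
  also have "\<dots> \<le> (1 / c) ^ (m + 2) * (surv_prob H m 1 - surv_prob H ?M 1)"
    using survival_drop c_pos by (intro mult_left_mono) auto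
  also have "surv_prob H m 1 - surv_prob H ?M 1 = (\<Sum>j\<in>{m..<?M}. hit_prob H (Suc j) 1)"
    using hit_prob_block[where m = m and M = ?M and H = H and x = 1] by simp
  also have "\<dots> = (\<Sum>n\<in>{m+2..<m+K+4}. ret_prob H n)"
  proof -
    have "m + K + 4 = ?M + 2" by simp
    then have "(\<Sum>n\<in>{m+2..<m+K+4}. ret_prob H n) = (\<Sum>j\<in>{m..<?M}. ret_prob H (j + 2))"
      by (simp only: sum.shift_bounds_nat_ivl)
    then show ?thesis by (simp add: ret_prob_def del: hit.simps)
  qed
  also have "(1 / c) ^ (m + 2) * \<dots> \<le> (\<Sum>n\<in>{m+2..<m+K+4}. (1 / c) ^ n * ret_prob H n)"
    unfolding sum_distrib_left using c_pos c_lt_1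
    by (intro sum_mono mult_right_mono power_increasing ret_prob_nonneg) auto
  finally show ?thesis .
qed

text \<open>Hence the transform is infinite at l = ln c: its partial sums there are unbounded.\<close>
lemma laplace_diverges: "\<exists>N. y < (\<Sum>n<N. (1 / c) ^ n * ret_prob H n)"
proof (rule ccontr)
  assume "\<not> ?thesis"
  then have "summable (\<lambda>n. (1 / c) ^ n * ret_prob H n)"
    using c_pos ret_prob_nonneg by (intro summableI_nonneg_bounded[where x = y]) (auto simp: not_less)
  then obtain N where N: "\<And>m n. N \<le> m \<Longrightarrow> norm (\<Sum>i\<in>{m..<n}. (1 / c) ^ i * ret_prob H i) < s / 2"
    unfolding summable_Cauchy using s_pos by (meson half_gt_zero)
  have "(\<lambda>n. c ^ n) \<longlonglongrightarrow> 0" using c_pos c_lt_1 by (intro LIMSEQ_power_zero) auto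
  then have "\<forall>\<^sub>F n in sequentially. c ^ n < s / 2" using s_pos by (intro order_tendstoD) auto
  then obtain K where "c ^ K \<le> s / 2" by (meson eventually_sequentially less_imp_le order_refl)
  from window_mass[OF this, of N] N[of "N + 2" "N + K + 4"] show False by simp
qed

lemma lambda0_eq: "lambda0 (2 * k) = ln c"
proof -
  have "1 + (tan a)\<^sup>2 = 1 / c\<^sup>2"
    using c_pos sin_cos_squared_add[of a] by (simp add: c_def tan_def field_simps power_divide)
  then have "lambda0 (2 * k) = - (1 / 2) * ln (1 / c\<^sup>2)" by (simp add: lambda0_def a_def)
  also have "\<dots> = ln c" using c_pos by (simp add: ln_div ln_realpow)
  finally show ?thesis .
qed

lemma Qinv_fin_root:
  assumes y: "0 < y"
  shows "ln c < Qinv_fin (2 * k) y \<and> laplace (ret_prob H) (Qinv_fin (2 * k) y) = y"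
proof -
  have root_iff: "(lambda0 (2 * k) < l \<and> Q (enat (2 * k)) l = ennreal y)
      \<longleftrightarrow> (ln c < l \<and> laplace (ret_prob H) l = y)" for l
  proof (cases "ln c < l")
    case True
    then show ?thesis
      using y laplace_nonneg[OF ret_prob_nonneg ret_prob_summable[OF True]]
      by (simp add: lambda0_eq Q_eq_laplace[OF ret_prob_summable[OF True]])
  qed (simp add: lambda0_eq)
  have "\<exists>l>ln c. laplace (ret_prob H) l = y"
  proof -
    obtain N where "y < (\<Sum>n<N. (1 / c) ^ n * ret_prob H n)" using laplace_diverges by blast
    moreover have "exp (- ln c * real n) = (1 / c) ^ n" for n
      using c_pos exp_mult_nat[of "ln c" n] by (simp add: exp_minus inverse_eq_divide)
    ultimately have big: "y < (\<Sum>n<N. exp (- ln c * real n) * ret_prob H n)" by simp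
    show ?thesis
      by (rule laplace_root_exists[OF ret_prob_nonneg ret_prob_le_1 ret_prob_0 y
            ret_prob_summable ret_prob_isCont big])
  qed
  moreover have "l1 = l2" if "ln c < l1 \<and> laplace (ret_prob H) l1 = y"
    and "ln c < l2 \<and> laplace (ret_prob H) l2 = y" for l1 l2
  proof (rule ccontr)
    have p2: "0 < ret_prob H 2" using ret_prob_2[of H] k2 by (simp add: hitset_strip_iff)
    have "laplace (ret_prob H) u < laplace (ret_prob H) v" if "ln c < v" "v < u" for u v
      using laplace_strict_antimono[of "ret_prob H", OF ret_prob_nonneg p2 \<open>v < u\<close>] that ret_prob_summable
      by simp
    moreover assume "l1 \<noteq> l2"
    ultimately show False using that by (metis linorder_neqE_linordered_idom less_irrefl)
  qed
  ultimately have "\<exists>!l. lambda0 (2 * k) < l \<and> Q (enat (2 * k)) l = ennreal y"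
    unfolding root_iff by (intro ex_ex1I) auto
  from theI'[OF this] show ?thesis unfolding Qinv_fin_def root_iff .
qed

text \<open>Gambler's ruin comparison: the walk killed only at 0 survives m steps with probability at
  most c^m + 1/(2k), since reaching +-2k before 0 from 1 has probability 1/(2k).\<close>
lemma surv_inf_bound: "surv_prob (hitset \<infinity>) m 1 \<le> c ^ m + 1 / (2 * real k)"
proof -
  define e0 :: "int \<Rightarrow> real" where "e0 x = (if x = 0 then 1 else 0)" for x
  define eT :: "int \<Rightarrow> real" where "eT x = (if x = 0 then 0 else 1)" for x
  have ruin: "(2 * real k) * (\<Sum>j\<le>m. hit H eT j 1) \<le> 1"
  proof -
    have "(\<Sum>j\<le>m. hit H (\<lambda>x. \<bar>x\<bar>) j 1) + survive H (\<lambda>x. \<bar>x\<bar>) m 1 = real_of_int \<bar>1\<bar>"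
    proof (rule hit_survive_harmonic)
      fix x :: int assume "\<not> H x"
      then have "x \<noteq> 0" unfolding hitset_strip_iff by auto
      then show "real_of_int \<bar>x - 1\<bar> + real_of_int \<bar>x + 1\<bar> = 2 * real_of_int \<bar>x\<bar>" by linarith
    qed
    moreover have "hit H (\<lambda>x. \<bar>x\<bar>) j 1 = (2 * real k) * hit H eT j 1" for j
    proof -
      have "hit H (\<lambda>x. \<bar>x\<bar>) j 1 = hit H (\<lambda>x. (2 * real k) * eT x) j 1"
        by (rule hit_cong) (auto simp: hitset_strip_iff eT_def)
      then show ?thesis by (simp only: hit_scale)
    qed
    moreover have "0 \<le> survive H (\<lambda>x. \<bar>x\<bar>) m 1" by (rule survive_nonneg) simp
    ultimately show ?thesis by (simp add: sum_distrib_left)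
  qed
  have "hit_prob H j 1 - hit H eT j 1 \<le> hit_prob (hitset \<infinity>) j 1" for j
  proof -
    have "hit_prob H j 1 = hit H (\<lambda>x. e0 x + eT x) j 1"
      by (rule hit_cong) (auto simp: e0_def eT_def)
    then have "hit_prob H j 1 = hit H e0 j 1 + hit H eT j 1" by (simp only: hit_add)
    moreover have "hit H e0 j 1 \<le> hit (hitset \<infinity>) e0 j 1"
      by (rule hit_antimono_set) (auto simp: hitset_inf_iff hitset_strip_iff e0_def)
    moreover have "hit (hitset \<infinity>) e0 j 1 = hit_prob (hitset \<infinity>) j 1"
      by (rule hit_cong) (auto simp: hitset_inf_iff e0_def)
    ultimately show ?thesis by simp
  qed
  then have "(\<Sum>j\<le>m. hit_prob H j 1 - hit H eT j 1) \<le> (\<Sum>j\<le>m. hit_prob (hitset \<infinity>) j 1)"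
    by (intro sum_mono)
  then have "(\<Sum>j\<le>m. hit_prob H j 1) - (\<Sum>j\<le>m. hit H eT j 1) \<le> (\<Sum>j\<le>m. hit_prob (hitset \<infinity>) j 1)"
    by (simp only: sum_subtractf)
  moreover have "(\<Sum>j\<le>m. hit H eT j 1) \<le> 1 / (2 * real k)"
    using ruin k2 by (simp add: field_simps)
  ultimately show ?thesis
    using hit_surv_prob[where H = H and m = m and x = 1] surv_upper[of m]
      hit_surv_prob[where H = "hitset \<infinity>" and m = m and x = 1] by linarith
qed

end

section \<open>The walk killed at 0\<close>

text \<open>The simple random walk is recurrent: by the gambler's ruin bound, for every k the
  survival probability is eventually below 1/k.\<close>
lemma surv_inf_tendsto_0: "(\<lambda>m. surv_prob (hitset \<infinity>) m 1) \<longlonglongrightarrow> 0"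
proof (rule LIMSEQ_I)
  fix r :: real assume r: "0 < r"
  obtain n :: nat where n: "max 2 (1 / r) < real n" using reals_Archimedean2 by blast
  have k2: "2 \<le> n" using n by simp
  have k: "1 / (2 * real n) < r / 2" using n r by (simp add: field_simps)
  interpret strip n using k2 by unfold_locales
  have "(\<lambda>m. c ^ m) \<longlonglongrightarrow> 0" using c_pos c_lt_1 by (intro LIMSEQ_power_zero) auto
  then have "\<forall>\<^sub>F m in sequentially. c ^ m < r / 2" using r by (intro order_tendstoD) auto
  then have "\<forall>\<^sub>F m in sequentially. norm (surv_prob (hitset \<infinity>) m 1 - 0) < r"
  proof eventually_elim
    case (elim m)
    have "0 \<le> surv_prob (hitset \<infinity>) m 1" by (rule survive_nonneg) simp
    then show ?case using surv_inf_bound[of m] elim k by simp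
  qed
  then show "\<exists>N. \<forall>m\<ge>N. norm (surv_prob (hitset \<infinity>) m 1 - 0) < r"
    unfolding eventually_sequentially .
qed

lemma ret_inf_sums: "ret_inf sums 1"
proof -
  have "(\<lambda>m. 1 - surv_prob (hitset \<infinity>) m 1) \<longlonglongrightarrow> 1 - 0"
    by (rule tendsto_diff[OF tendsto_const surv_inf_tendsto_0])
  then have "(\<lambda>m. \<Sum>n<m + 2. ret_inf n) \<longlonglongrightarrow> 1"
    by (simp only: ret_prob_partial_sum diff_zero)
  then show ?thesis unfolding sums_def by (rule LIMSEQ_offset)
qed

lemma ret_inf_summable: "0 \<le> l \<Longrightarrow> summable (\<lambda>n. exp (- l * real n) * ret_inf n)"
proof (rule summable_comparison_test'[where g = ret_inf])
  show "summable ret_inf" using ret_inf_sums by (rule sums_summable)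
  fix n assume "0 \<le> l"
  then have "exp (- l * real n) \<le> 1" by simp
  then show "norm (exp (- l * real n) * ret_inf n) \<le> ret_inf n"
    using ret_prob_nonneg[of "hitset \<infinity>" n] by (simp add: mult_left_le_one_le)
qed

lemma ret_inf_isCont: "0 < l \<Longrightarrow> isCont (laplace ret_inf) l"
  by (rule laplace_isCont[where B = 1 and r = 1]) (auto intro: ret_prob_nonneg ret_prob_le_1)

lemma laplace_inf_0: "laplace ret_inf 0 = 1"
  unfolding laplace_def using ret_inf_sums by (simp add: sums_iff)

lemma laplace_inf_strict: "0 \<le> l1 \<Longrightarrow> l1 < l2 \<Longrightarrow> laplace ret_inf l2 < laplace ret_inf l1"
  using laplace_strict_antimono[of ret_inf, OF ret_prob_nonneg _ _ ret_inf_summable ret_inf_summable]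
    ret_prob_2[of "hitset \<infinity>"] by (simp add: hitset_inf_iff)

lemma Qinv_inf_root:
  assumes y: "0 < y" "y \<le> 1"
  shows "0 \<le> Qinv_inf y \<and> laplace ret_inf (Qinv_inf y) = y"
proof -
  have root_iff: "(0 \<le> l \<and> Q \<infinity> l = ennreal y) \<longleftrightarrow> (0 \<le> l \<and> laplace ret_inf l = y)" for l
  proof (cases "0 \<le> l")
    case True
    then show ?thesis
      using y laplace_nonneg[OF ret_prob_nonneg ret_inf_summable[OF True]]
      by (simp add: Q_eq_laplace[OF ret_inf_summable[OF True]])
  qed simp
  have "\<exists>l\<ge>0. laplace ret_inf l = y"
  proof (cases "y = 1")
    case False
    have "\<forall>\<^sub>F N in sequentially. y < (\<Sum>n<N. ret_inf n)"
      using ret_inf_sums y False unfolding sums_def by (intro order_tendstoD) auto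
    then obtain N where "y < (\<Sum>n<N. ret_inf n)" by (meson eventually_sequentially order_refl)
    then have big: "y < (\<Sum>n<N. exp (- 0 * real n) * ret_inf n)" by simp
    have "\<exists>l>0. laplace ret_inf l = y"
      by (rule laplace_root_exists[OF ret_prob_nonneg ret_prob_le_1 ret_prob_0 y(1)
            ret_inf_summable ret_inf_isCont big]) auto
    then show ?thesis by (auto intro: less_imp_le)
  qed (use laplace_inf_0 in auto)
  moreover have "l1 = l2" if "0 \<le> l1 \<and> laplace ret_inf l1 = y" and "0 \<le> l2 \<and> laplace ret_inf l2 = y"
    for l1 l2
    using that laplace_inf_strict by (metis linorder_neqE_linordered_idom less_irrefl)
  ultimately have "\<exists>!l. 0 \<le> l \<and> Q \<infinity> l = ennreal y"
    unfolding root_iff by (intro ex_ex1I) auto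
  from theI'[OF this] show ?thesis unfolding Qinv_inf_def root_iff .
qed

text \<open>For y > 1 the root is cut off at l = 0: L = (Q_inf)^{-1}(min y 1) satisfies
  laplace ret_inf L \<le> y, with equality unless L = 0.\<close>
lemma Qinv_inf_min:
  assumes "0 < y"
  defines "L \<equiv> Qinv_inf (min y 1)"
  shows "0 \<le> L" and "laplace ret_inf L \<le> y" and "0 < L \<Longrightarrow> laplace ret_inf L = y"
proof -
  have L: "0 \<le> L" "laplace ret_inf L = min y 1"
    using Qinv_inf_root[of "min y 1"] assms by auto
  show "0 \<le> L" and "laplace ret_inf L \<le> y" using L by auto
  assume "0 < L"
  then have "min y 1 < 1" using L laplace_inf_strict[of 0 L] laplace_inf_0 by simp
  then show "laplace ret_inf L = y" using L by linarith
qed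

section \<open>Convergence of the inverse transforms\<close>

lemma ln_c_tendsto_0: "(\<lambda>k. ln (strip.c k)) \<longlonglongrightarrow> 0"
proof -
  have "(\<lambda>k. ln (cos (pi / (2 * real k)))) \<longlonglongrightarrow> 0" by real_asymp
  moreover have "\<forall>\<^sub>F k in sequentially. ln (cos (pi / (2 * real k))) = ln (strip.c k)"
    using eventually_ge_at_top[of 2]
    by eventually_elim (simp add: strip_def strip.c_def strip.a_def)
  ultimately show ?thesis by (rule Lim_transform_eventually)
qed

text \<open>Since the strip and infinite return laws agree before time 2k, their transforms converge
  on (0, inf).\<close>
lemma laplace_strip_tendsto:
  assumes "0 < l"
  shows "(\<lambda>k. laplace (ret_prob (hitset (enat (2 * k)))) l) \<longlonglongrightarrow> laplace ret_inf l"
proof (rule laplace_tendsto[OF assms])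
  show "\<bar>ret_prob (hitset (enat (2 * k))) n\<bar> \<le> 1" for k n
    using ret_prob_nonneg ret_prob_le_1 by (simp add: abs_le_iff)
  show "(\<lambda>k. ret_prob (hitset (enat (2 * k))) n) \<longlonglongrightarrow> ret_inf n" for n
  proof (rule tendsto_eventually)
    show "\<forall>\<^sub>F k in sequentially. ret_prob (hitset (enat (2 * k))) n = ret_inf n"
      using eventually_gt_at_top[of n] by eventually_elim (simp add: ret_prob_strip_eq_inf)
  qed
qed

lemma root_convergence:
  fixes G :: "nat \<Rightarrow> real \<Rightarrow> real" and Glim :: "real \<Rightarrow> real"
  assumes lb: "lb \<longlonglongrightarrow> 0"
    and roots: "\<forall>\<^sub>F k in sequentially. lb k < l k \<and> G k (l k) = y
                  \<and> (\<forall>u v. lb k < u \<longrightarrow> u \<le> v \<longrightarrow> G k v \<le> G k u)"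
    and conv: "\<And>a. 0 < a \<Longrightarrow> (\<lambda>k. G k a) \<longlonglongrightarrow> Glim a"
    and strict: "\<And>u v. 0 \<le> u \<Longrightarrow> u < v \<Longrightarrow> Glim v < Glim u"
    and L: "0 \<le> L" "Glim L \<le> y" "0 < L \<Longrightarrow> Glim L = y"
  shows "l \<longlonglongrightarrow> L"
proof (rule order_tendstoI)
  fix a assume "a < L"
  show "\<forall>\<^sub>F k in sequentially. a < l k"
  proof (cases "a < 0")
    case True
    from order_tendstoD(1)[OF lb True] roots show ?thesis by eventually_elim auto
  next
    case False
    define a' where "a' = (a + L) / 2"
    have a': "0 < a'" "a < a'" "a' < L" using False \<open>a < L\<close> by (auto simp: a'_def)
    have "y < Glim a'" using strict[of a' L] L a' by simp
    from order_tendstoD(1)[OF conv[OF a'(1)] this] order_tendstoD(2)[OF lb a'(1)] roots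
    show ?thesis
    proof eventually_elim
      case (elim k)
      then have "\<not> l k \<le> a'" by force
      then show ?case using a' by simp
    qed
  qed
next
  fix b assume "L < b"
  then have b: "0 < b" "Glim b < y" using strict[of L b] L by auto
  from order_tendstoD(2)[OF conv[OF b(1)] b(2)] order_tendstoD(2)[OF lb b(1)] roots
  show "\<forall>\<^sub>F k in sequentially. l k < b"
  proof eventually_elim
    case (elim k)
    then have "\<not> b \<le> l k" by force
    then show ?case by simp
  qed
qed

theorem lemma4:
  fixes \<delta> :: real
  shows "((\<lambda>k::nat. Qinv_fin (2 * k) (exp (- \<delta>)))
           \<longlongrightarrow> Qinv_inf (min (exp (- \<delta>)) 1)) sequentially"
proof -
  define y where "y = exp (- \<delta>)"
  have y: "0 < y" by (simp add: y_def)
  let ?G = "\<lambda>k. laplace (ret_prob (hitset (enat (2 * k))))"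
  have roots: "\<forall>\<^sub>F k in sequentially. ln (strip.c k) < Qinv_fin (2 * k) y
      \<and> ?G k (Qinv_fin (2 * k) y) = y
      \<and> (\<forall>u v. ln (strip.c k) < u \<longrightarrow> u \<le> v \<longrightarrow> ?G k v \<le> ?G k u)"
    using eventually_ge_at_top[of 2]
  proof eventually_elim
    case (elim k)
    interpret strip k using elim by unfold_locales
    show ?case using Qinv_fin_root[OF y] laplace_strip_antimono by blast
  qed
  have "(\<lambda>k. Qinv_fin (2 * k) y) \<longlonglongrightarrow> Qinv_inf (min y 1)"
    by (rule root_convergence[OF ln_c_tendsto_0 roots laplace_strip_tendsto laplace_inf_strict
          Qinv_inf_min[OF y]])
  then show ?thesis by (simp add: y_def)
qed

end
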